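(* Let $a,\varepsilon\in\mathbb{R}$ with $\frac{|a|}{\sqrt2}<\varepsilon<|a|$ or $-|a|<\varepsilon<-\frac{|a|}{\sqrt2}$. Let $X_-(x,y,z)=(y,\,-ay+x+az+\varepsilon,\,x)$, $X_+(x,y,z)=(y,\,-ay-x-az+\varepsilon,\,x)$, $P=\left(-\frac{\sqrt{a^2-\varepsilon^2}}{a},\frac{\varepsilon}{a},0\right)$, and let $x_{\alpha_\pm}(t)$ be the solution of $\dot{\mathbf x}=X_\pm(\mathbf x)$ with $x_{\alpha_\pm}(0)=P$. Set $$t_-=\ln\left(\frac{\sqrt{a^2-\varepsilon^2}+\varepsilon}{\varepsilon-\sqrt{a^2-\varepsilon^2}}\right),\qquad t_+=2\arctan\left(\frac{\sqrt{a^2-\varepsilon^2}}{\varepsilon}\right).$$ Then $\|x_{\alpha_-}(t)\|^2<1$ for $0<t<t_-$ and $\|x_{\alpha_+}(t)\|^2>1$ for $0<t<t_+$.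
   Context: $\|\cdot\|$ is the Euclidean norm on $\mathbb{R}^3$. *)

theory Defs
  imports "HOL-Analysis.Analysis"
begin

definition X_minus :: "real \<Rightarrow> real \<Rightarrow> real^3 \<Rightarrow> real^3" where
  "X_minus a \<epsilon> v = vector [v$2, - a * v$2 + v$1 + a * v$3 + \<epsilon>, v$1]"

definition X_plus :: "real \<Rightarrow> real \<Rightarrow> real^3 \<Rightarrow> real^3" where
  "X_plus a \<epsilon> v = vector [v$2, - a * v$2 - v$1 - a * v$3 + \<epsilon>, v$1]"

definition P_pt :: "real \<Rightarrow> real \<Rightarrow> real^3" where
  "P_pt a \<epsilon> = vector [- sqrt (a^2 - \<epsilon>^2) / a, \<epsilon> / a, 0]"

definition t_minus :: "real \<Rightarrow> real \<Rightarrow> real" where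
  "t_minus a \<epsilon> = ln ((sqrt (a^2 - \<epsilon>^2) + \<epsilon>) / (\<epsilon> - sqrt (a^2 - \<epsilon>^2)))"

definition t_plus :: "real \<Rightarrow> real \<Rightarrow> real" where
  "t_plus a \<epsilon> = 2 * arctan (sqrt (a^2 - \<epsilon>^2) / \<epsilon>)"

end

(* Each field leaves invariant a plane through P: w = a (z - y) + \<epsilon> for X_-, and
   w = a (z + y) - \<epsilon> for X_+, satisfies w' = - a w and vanishes at P. On that plane the
   remaining dynamics is x' = y, y' = x for X_- and x' = y, y' = - x for X_+, so both orbits
   are explicit. Put s = sqrt (a^2 - \<epsilon>^2). Along the X_+ orbit the squared norm is
   1 + ((\<epsilon> (1 - cos t) - s sin t) / a)^2, and by the half-angle formulas the bracket is
   nonzero for 0 < t < t_+ = 2 arctan (s / \<epsilon>). Along the X_- orbit, with u = exp t,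
   4 a^2 u^2 (|x|^2 - 1) factors as
   (u - 1) ((\<epsilon> - s) u - (\<epsilon> + s)) (3 (\<epsilon> - s) u^2 + 2 \<epsilon> u + 3 (\<epsilon> + s)),
   whose middle factor is negative exactly for u < (\<epsilon> + s) / (\<epsilon> - s) = exp t_-.
   For \<epsilon> < 0 both time intervals are empty. *)

theory Submission
  imports Defs
begin

lemma has_real_derivative_vec_nth:
  fixes f :: "real \<Rightarrow> real^'n"
  assumes "(f has_vector_derivative f') (at t)"
  shows "((\<lambda>t. f t $ i) has_real_derivative f' $ i) (at t)"
  using bounded_linear.has_vector_derivative[OF bounded_linear_vec_nth assms, of i]
  by (simp add: has_real_derivative_iff_has_vector_derivative)

lemma linear_ode_solution:
  fixes f :: "real \<Rightarrow> real"
  assumes "\<And>t. (f has_real_derivative c * f t) (at t)"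
  shows "f t = f 0 * exp (c * t)"
proof -
  have "((\<lambda>t. f t * exp (- c * t)) has_real_derivative 0) (at t)" for t
    by (auto intro!: derivative_eq_intros assms simp: algebra_simps)
  then have "f t * exp (- c * t) = f 0 * exp (- c * 0)"
    by (rule DERIV_isconst_all[rule_format])
  then have "f t * exp (- c * t) * exp (c * t) = f 0 * exp (c * t)"
    by simp
  then show ?thesis
    by (simp add: mult.assoc flip: exp_add)
qed

lemma hyperbolic_system_solution:
  fixes p q :: "real \<Rightarrow> real"
  assumes p: "\<And>t. (p has_real_derivative q t) (at t)"
    and q: "\<And>t. (q has_real_derivative p t) (at t)"
  shows "q t + p t = (q 0 + p 0) * exp t" and "q t - p t = (q 0 - p 0) * exp (- t)"
proof -
  have "((\<lambda>t. q t + p t) has_real_derivative 1 * (q t + p t)) (at t)" for t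
    by (rule DERIV_cong[OF DERIV_add[OF q p]]) simp
  then have "q t + p t = (q 0 + p 0) * exp (1 * t)"
    by (rule linear_ode_solution)
  then show "q t + p t = (q 0 + p 0) * exp t"
    by simp
  have "((\<lambda>t. q t - p t) has_real_derivative -1 * (q t - p t)) (at t)" for t
    by (rule DERIV_cong[OF DERIV_diff[OF q p]]) simp
  then have "q t - p t = (q 0 - p 0) * exp (-1 * t)"
    by (rule linear_ode_solution)
  then show "q t - p t = (q 0 - p 0) * exp (- t)"
    by simp
qed

lemma harmonic_oscillator_solution:
  fixes p q :: "real \<Rightarrow> real"
  assumes p: "\<And>t. (p has_real_derivative q t) (at t)"
    and q: "\<And>t. (q has_real_derivative - p t) (at t)"
  shows "p t = p 0 * cos t + q 0 * sin t" and "q t = q 0 * cos t - p 0 * sin t"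
proof -
  define E where "E t = (p t - p 0 * cos t - q 0 * sin t)\<^sup>2 + (q t - q 0 * cos t + p 0 * sin t)\<^sup>2" for t
  have "(E has_real_derivative 0) (at t)" for t
    unfolding E_def by (auto intro!: derivative_eq_intros p q simp: algebra_simps)
  then have "E t = E 0"
    by (rule DERIV_isconst_all[rule_format])
  then have "E t = 0"
    by (simp add: E_def)
  then show "p t = p 0 * cos t + q 0 * sin t" and "q t = q 0 * cos t - p 0 * sin t"
    unfolding E_def by simp_all
qed

lemma X_minus_solution_components:
  assumes "\<And>t. (x has_vector_derivative X_minus a \<epsilon> (x t)) (at t)"
  shows "((\<lambda>t. x t $ 1) has_real_derivative x t $ 2) (at t)"
    and "((\<lambda>t. x t $ 2) has_real_derivative - a * x t $ 2 + x t $ 1 + a * x t $ 3 + \<epsilon>) (at t)"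
    and "((\<lambda>t. x t $ 3) has_real_derivative x t $ 1) (at t)"
  using has_real_derivative_vec_nth[OF assms[of t], of 1] has_real_derivative_vec_nth[OF assms[of t], of 2]
    has_real_derivative_vec_nth[OF assms[of t], of 3]
  by (simp_all add: X_minus_def)

lemma X_plus_solution_components:
  assumes "\<And>t. (x has_vector_derivative X_plus a \<epsilon> (x t)) (at t)"
  shows "((\<lambda>t. x t $ 1) has_real_derivative x t $ 2) (at t)"
    and "((\<lambda>t. x t $ 2) has_real_derivative - a * x t $ 2 - x t $ 1 - a * x t $ 3 + \<epsilon>) (at t)"
    and "((\<lambda>t. x t $ 3) has_real_derivative x t $ 1) (at t)"
  using has_real_derivative_vec_nth[OF assms[of t], of 1] has_real_derivative_vec_nth[OF assms[of t], of 2]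
    has_real_derivative_vec_nth[OF assms[of t], of 3]
  by (simp_all add: X_plus_def)

lemma X_minus_plane_decay:
  assumes "\<And>t. (x has_vector_derivative X_minus a \<epsilon> (x t)) (at t)"
  shows "a * (x t $ 3 - x t $ 2) + \<epsilon> = (a * (x 0 $ 3 - x 0 $ 2) + \<epsilon>) * exp (- a * t)"
  by (rule linear_ode_solution)
    (auto intro!: derivative_eq_intros X_minus_solution_components[OF assms] simp: algebra_simps)

lemma X_plus_plane_decay:
  assumes "\<And>t. (x has_vector_derivative X_plus a \<epsilon> (x t)) (at t)"
  shows "a * (x t $ 3 + x t $ 2) - \<epsilon> = (a * (x 0 $ 3 + x 0 $ 2) - \<epsilon>) * exp (- a * t)"
  by (rule linear_ode_solution)
    (auto intro!: derivative_eq_intros X_plus_solution_components[OF assms] simp: algebra_simps)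

lemma norm_cart3_power2: "(norm (v :: real^3))\<^sup>2 = (v $ 1)\<^sup>2 + (v $ 2)\<^sup>2 + (v $ 3)\<^sup>2"
  by (simp add: norm_vec_def L2_set_def sum_3)

lemma hyperbolic_orbit_norm_identity:
  fixes a \<epsilon> s u :: real
  assumes "a \<noteq> 0" "u > 0" "a\<^sup>2 = \<epsilon>\<^sup>2 + s\<^sup>2"
  shows "((((\<epsilon> - s) * u - (\<epsilon> + s) / u) / (2 * a))\<^sup>2 + (((\<epsilon> - s) * u + (\<epsilon> + s) / u) / (2 * a))\<^sup>2
           + (((\<epsilon> - s) * u + (\<epsilon> + s) / u) / (2 * a) - \<epsilon> / a)\<^sup>2 - 1) * (4 * a\<^sup>2 * u\<^sup>2)
       = (u - 1) * ((\<epsilon> - s) * u - (\<epsilon> + s)) * (3 * (\<epsilon> - s) * u\<^sup>2 + 2 * \<epsilon> * u + 3 * (\<epsilon> + s))"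
proof -
  have "((((\<epsilon> - s) * u - (\<epsilon> + s) / u) / (2 * a))\<^sup>2 + (((\<epsilon> - s) * u + (\<epsilon> + s) / u) / (2 * a))\<^sup>2
           + (((\<epsilon> - s) * u + (\<epsilon> + s) / u) / (2 * a) - \<epsilon> / a)\<^sup>2 - 1) * (4 * a\<^sup>2 * u\<^sup>2)
      = ((\<epsilon> - s) * u\<^sup>2 - (\<epsilon> + s))\<^sup>2 + ((\<epsilon> - s) * u\<^sup>2 + (\<epsilon> + s))\<^sup>2
           + ((\<epsilon> - s) * u\<^sup>2 + (\<epsilon> + s) - 2 * \<epsilon> * u)\<^sup>2 - 4 * a\<^sup>2 * u\<^sup>2"
    using assms(1,2) by (simp add: field_simps power2_eq_square)
  also have "\<dots> = (u - 1) * ((\<epsilon> - s) * u - (\<epsilon> + s)) * (3 * (\<epsilon> - s) * u\<^sup>2 + 2 * \<epsilon> * u + 3 * (\<epsilon> + s))"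
    unfolding \<open>a\<^sup>2 = \<epsilon>\<^sup>2 + s\<^sup>2\<close> by (simp add: algebra_simps power2_eq_square)
  finally show ?thesis .
qed

lemma harmonic_orbit_norm_identity:
  fixes a \<epsilon> s t :: real
  assumes "a \<noteq> 0" "a\<^sup>2 = \<epsilon>\<^sup>2 + s\<^sup>2"
  shows "((\<epsilon> * sin t - s * cos t) / a)\<^sup>2 + ((\<epsilon> * cos t + s * sin t) / a)\<^sup>2
           + (\<epsilon> / a - (\<epsilon> * cos t + s * sin t) / a)\<^sup>2
       = 1 + ((\<epsilon> * (1 - cos t) - s * sin t) / a)\<^sup>2"
proof -
  have "(\<epsilon> * sin t - s * cos t)\<^sup>2 + (\<epsilon> * cos t + s * sin t)\<^sup>2 = a\<^sup>2"
    using sin_cos_squared_add[of t] assms(2) by algebra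
  then show ?thesis
    using assms(1) by (simp add: power_divide field_simps)
qed

lemma mult_one_minus_cos_less_mult_sin:
  fixes \<epsilon> s t :: real
  assumes "0 < \<epsilon>" "0 < t" "t < 2 * arctan (s / \<epsilon>)"
  shows "\<epsilon> * (1 - cos t) < s * sin t"
proof -
  define h where "h = t / 2"
  have "t = 2 * h" "0 < h" "h < arctan (s / \<epsilon>)"
    using assms by (simp_all add: h_def)
  moreover have "arctan (s / \<epsilon>) < pi / 2"
    by (rule arctan_ubound)
  ultimately have "0 < sin h" "0 < cos h" "arctan (tan h) = h"
    by (auto intro: sin_gt_zero cos_gt_zero arctan_tan)
  then have "sin h / cos h < s / \<epsilon>"
    using \<open>h < arctan (s / \<epsilon>)\<close> by (metis arctan_less_iff tan_def)
  then have "\<epsilon> * sin h < s * cos h"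
    using \<open>0 < cos h\<close> \<open>0 < \<epsilon>\<close> by (simp add: field_simps)
  then have "2 * sin h * (\<epsilon> * sin h - s * cos h) < 0"
    using \<open>0 < sin h\<close> by (simp add: mult_pos_neg)
  moreover have "\<epsilon> * (1 - cos t) - s * sin t = 2 * sin h * (\<epsilon> * sin h - s * cos h)"
    unfolding \<open>t = 2 * h\<close> sin_double cos_double_sin by (simp add: algebra_simps power2_eq_square)
  ultimately show ?thesis
    by simp
qed

lemma X_minus_orbit_closed_form:
  fixes x :: "real \<Rightarrow> real^3"
  assumes "a \<noteq> 0"
    and ode: "\<And>t. (x has_vector_derivative X_minus a \<epsilon> (x t)) (at t)"
    and init: "x 0 = vector [- s / a, \<epsilon> / a, 0]"
  shows "x t $ 1 = ((\<epsilon> - s) * exp t - (\<epsilon> + s) / exp t) / (2 * a)"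
    and "x t $ 2 = ((\<epsilon> - s) * exp t + (\<epsilon> + s) / exp t) / (2 * a)"
    and "x t $ 3 = x t $ 2 - \<epsilon> / a"
proof -
  have plane: "x \<tau> $ 3 = x \<tau> $ 2 - \<epsilon> / a" for \<tau>
    using X_minus_plane_decay[OF ode, of \<tau>] \<open>a \<noteq> 0\<close> by (simp add: init field_simps)
  then show "x t $ 3 = x t $ 2 - \<epsilon> / a" .
  have "((\<lambda>\<tau>. x \<tau> $ 2) has_real_derivative x \<tau> $ 1) (at \<tau>)" for \<tau>
    by (rule DERIV_cong[OF X_minus_solution_components(2)[OF ode]])
      (simp add: plane \<open>a \<noteq> 0\<close> right_diff_distrib)
  note hyp = hyperbolic_system_solution[OF X_minus_solution_components(1)[OF ode] this, of t]
  have sum: "x t $ 2 + x t $ 1 = (\<epsilon> - s) / a * exp t"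
    using hyp(1) by (simp add: init diff_divide_distrib)
  have diff: "x t $ 2 - x t $ 1 = (\<epsilon> + s) / a / exp t"
    using hyp(2) by (simp add: init exp_minus add_divide_distrib divide_inverse distrib_right)
  have "x t $ 1 = ((x t $ 2 + x t $ 1) - (x t $ 2 - x t $ 1)) / 2"
    by simp
  also have "\<dots> = ((\<epsilon> - s) * exp t - (\<epsilon> + s) / exp t) / (2 * a)"
    unfolding sum diff using \<open>a \<noteq> 0\<close> by (simp add: field_simps)
  finally show "x t $ 1 = ((\<epsilon> - s) * exp t - (\<epsilon> + s) / exp t) / (2 * a)" .
  have "x t $ 2 = ((x t $ 2 + x t $ 1) + (x t $ 2 - x t $ 1)) / 2"
    by simp
  also have "\<dots> = ((\<epsilon> - s) * exp t + (\<epsilon> + s) / exp t) / (2 * a)"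
    unfolding sum diff using \<open>a \<noteq> 0\<close> by (simp add: field_simps)
  finally show "x t $ 2 = ((\<epsilon> - s) * exp t + (\<epsilon> + s) / exp t) / (2 * a)" .
qed

lemma X_plus_orbit_closed_form:
  fixes x :: "real \<Rightarrow> real^3"
  assumes "a \<noteq> 0"
    and ode: "\<And>t. (x has_vector_derivative X_plus a \<epsilon> (x t)) (at t)"
    and init: "x 0 = vector [- s / a, \<epsilon> / a, 0]"
  shows "x t $ 1 = (\<epsilon> * sin t - s * cos t) / a"
    and "x t $ 2 = (\<epsilon> * cos t + s * sin t) / a"
    and "x t $ 3 = \<epsilon> / a - x t $ 2"
proof -
  have plane: "x \<tau> $ 3 = \<epsilon> / a - x \<tau> $ 2" for \<tau>
    using X_plus_plane_decay[OF ode, of \<tau>] \<open>a \<noteq> 0\<close> by (simp add: init field_simps)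
  then show "x t $ 3 = \<epsilon> / a - x t $ 2" .
  have "((\<lambda>\<tau>. x \<tau> $ 2) has_real_derivative - x \<tau> $ 1) (at \<tau>)" for \<tau>
    by (rule DERIV_cong[OF X_plus_solution_components(2)[OF ode]])
      (simp add: plane \<open>a \<noteq> 0\<close> right_diff_distrib)
  note osc = harmonic_oscillator_solution[OF X_plus_solution_components(1)[OF ode] this, of t]
  then show "x t $ 1 = (\<epsilon> * sin t - s * cos t) / a" and "x t $ 2 = (\<epsilon> * cos t + s * sin t) / a"
    using \<open>a \<noteq> 0\<close> by (simp_all add: init field_simps)
qed

lemma X_minus_orbit_inside_unit_ball:
  fixes x :: "real \<Rightarrow> real^3"
  assumes "0 < \<epsilon>" "\<epsilon>\<^sup>2 < a\<^sup>2" "a\<^sup>2 < 2 * \<epsilon>\<^sup>2"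
    and ode: "\<And>t. (x has_vector_derivative X_minus a \<epsilon> (x t)) (at t)"
    and init: "x 0 = P_pt a \<epsilon>"
    and "0 < t" "t < t_minus a \<epsilon>"
  shows "(norm (x t))\<^sup>2 < 1"
proof -
  define s where "s = sqrt (a\<^sup>2 - \<epsilon>\<^sup>2)"
  have "a \<noteq> 0" "0 < s" "a\<^sup>2 = \<epsilon>\<^sup>2 + s\<^sup>2"
    using assms(2) by (auto simp: s_def)
  have "s\<^sup>2 < \<epsilon>\<^sup>2"
    using assms(3) \<open>a\<^sup>2 = \<epsilon>\<^sup>2 + s\<^sup>2\<close> by linarith
  then have "s < \<epsilon>"
    using assms(1) by (simp add: power_less_imp_less_base)
  note orbit = X_minus_orbit_closed_form[OF \<open>a \<noteq> 0\<close> ode init[unfolded P_pt_def s_def[symmetric]], of t]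
  define u where "u = exp t"
  have "1 < u"
    using \<open>0 < t\<close> by (simp add: u_def)
  have "exp t < exp (ln ((s + \<epsilon>) / (\<epsilon> - s)))"
    using \<open>t < t_minus a \<epsilon>\<close> by (simp add: t_minus_def s_def)
  then have "(\<epsilon> - s) * u < \<epsilon> + s"
    using \<open>0 < s\<close> \<open>s < \<epsilon>\<close> by (simp add: u_def field_simps)
  have "((norm (x t))\<^sup>2 - 1) * (4 * a\<^sup>2 * u\<^sup>2)
      = (u - 1) * ((\<epsilon> - s) * u - (\<epsilon> + s)) * (3 * (\<epsilon> - s) * u\<^sup>2 + 2 * \<epsilon> * u + 3 * (\<epsilon> + s))"
    unfolding norm_cart3_power2 orbit u_def[symmetric]
    by (rule hyperbolic_orbit_norm_identity) (use \<open>a \<noteq> 0\<close> \<open>1 < u\<close> \<open>a\<^sup>2 = \<epsilon>\<^sup>2 + s\<^sup>2\<close> in auto)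
  also have "\<dots> < 0"
  proof (rule mult_neg_pos)
    show "(u - 1) * ((\<epsilon> - s) * u - (\<epsilon> + s)) < 0"
      using \<open>1 < u\<close> \<open>(\<epsilon> - s) * u < \<epsilon> + s\<close> by (simp add: mult_pos_neg)
    show "0 < 3 * (\<epsilon> - s) * u\<^sup>2 + 2 * \<epsilon> * u + 3 * (\<epsilon> + s)"
      using \<open>0 < s\<close> \<open>s < \<epsilon>\<close> \<open>1 < u\<close> by (simp add: add_pos_pos)
  qed
  finally show ?thesis
    using \<open>a \<noteq> 0\<close> \<open>1 < u\<close> by (simp add: mult_less_0_iff)
qed

lemma X_plus_orbit_outside_unit_ball:
  fixes x :: "real \<Rightarrow> real^3"
  assumes "0 < \<epsilon>" "\<epsilon>\<^sup>2 < a\<^sup>2"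
    and ode: "\<And>t. (x has_vector_derivative X_plus a \<epsilon> (x t)) (at t)"
    and init: "x 0 = P_pt a \<epsilon>"
    and "0 < t" "t < t_plus a \<epsilon>"
  shows "1 < (norm (x t))\<^sup>2"
proof -
  define s where "s = sqrt (a\<^sup>2 - \<epsilon>\<^sup>2)"
  have "a \<noteq> 0" "a\<^sup>2 = \<epsilon>\<^sup>2 + s\<^sup>2"
    using assms(2) by (auto simp: s_def)
  note orbit = X_plus_orbit_closed_form[OF \<open>a \<noteq> 0\<close> ode init[unfolded P_pt_def s_def[symmetric]], of t]
  have "(norm (x t))\<^sup>2 = 1 + ((\<epsilon> * (1 - cos t) - s * sin t) / a)\<^sup>2"
    unfolding norm_cart3_power2 orbit
    by (rule harmonic_orbit_norm_identity) (use \<open>a \<noteq> 0\<close> \<open>a\<^sup>2 = \<epsilon>\<^sup>2 + s\<^sup>2\<close> in auto)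
  moreover have "\<epsilon> * (1 - cos t) < s * sin t"
    using \<open>t < t_plus a \<epsilon>\<close> by (intro mult_one_minus_cos_less_mult_sin assms) (simp add: t_plus_def s_def)
  ultimately show ?thesis
    using \<open>a \<noteq> 0\<close> by simp
qed

lemma t_minus_t_plus_nonpos:
  assumes "\<epsilon> < 0" "\<epsilon>\<^sup>2 < a\<^sup>2" "a\<^sup>2 < 2 * \<epsilon>\<^sup>2"
  shows "t_minus a \<epsilon> \<le> 0" and "t_plus a \<epsilon> \<le> 0"
proof -
  define s where "s = sqrt (a\<^sup>2 - \<epsilon>\<^sup>2)"
  have "0 < s" "a\<^sup>2 = \<epsilon>\<^sup>2 + s\<^sup>2"
    using assms(2) by (simp_all add: s_def)
  have "s\<^sup>2 < (- \<epsilon>)\<^sup>2"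
    using assms(3) \<open>a\<^sup>2 = \<epsilon>\<^sup>2 + s\<^sup>2\<close> by simp
  then have "s < - \<epsilon>"
    by (rule power_less_imp_less_base) (use assms(1) in simp)
  then have "0 < (s + \<epsilon>) / (\<epsilon> - s)" "(s + \<epsilon>) / (\<epsilon> - s) \<le> 1"
    using \<open>0 < s\<close> by (simp_all add: zero_less_divide_iff divide_le_eq)
  then show "t_minus a \<epsilon> \<le> 0"
    by (simp add: t_minus_def s_def[symmetric])
  have "s / \<epsilon> < 0"
    using \<open>0 < s\<close> assms(1) by (simp add: divide_pos_neg)
  then show "t_plus a \<epsilon> \<le> 0"
    by (simp add: t_plus_def s_def[symmetric] arctan_less_zero_iff less_imp_le)
qed

lemma sqrt2_window_imp_power2_bounds:
  fixes a \<epsilon> :: real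
  assumes "(\<bar>a\<bar> / sqrt 2 < \<epsilon> \<and> \<epsilon> < \<bar>a\<bar>) \<or> (- \<bar>a\<bar> < \<epsilon> \<and> \<epsilon> < - \<bar>a\<bar> / sqrt 2)"
  shows "\<epsilon>\<^sup>2 < a\<^sup>2" and "a\<^sup>2 < 2 * \<epsilon>\<^sup>2"
proof -
  have "0 \<le> \<bar>a\<bar> / sqrt 2"
    by simp
  with assms have "\<bar>a\<bar> / sqrt 2 < \<bar>\<epsilon>\<bar>" "\<bar>\<epsilon>\<bar> < \<bar>a\<bar>"
    by linarith+
  then have "\<bar>a\<bar> < \<bar>\<epsilon>\<bar> * sqrt 2"
    by (simp add: divide_less_eq)
  then have "\<bar>a\<bar>\<^sup>2 < (\<bar>\<epsilon>\<bar> * sqrt 2)\<^sup>2"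
    by (intro power_strict_mono) auto
  then show "a\<^sup>2 < 2 * \<epsilon>\<^sup>2"
    by (simp add: power_mult_distrib)
  have "\<bar>\<epsilon>\<bar>\<^sup>2 < \<bar>a\<bar>\<^sup>2"
    using \<open>\<bar>\<epsilon>\<bar> < \<bar>a\<bar>\<close> by (intro power_strict_mono) auto
  then show "\<epsilon>\<^sup>2 < a\<^sup>2"
    by simp
qed

theorem mainTheorem6:
  fixes a \<epsilon> :: real and xm xp :: "real \<Rightarrow> real^3"
  assumes heps: "(\<bar>a\<bar> / sqrt 2 < \<epsilon> \<and> \<epsilon> < \<bar>a\<bar>) \<or> (- \<bar>a\<bar> < \<epsilon> \<and> \<epsilon> < - \<bar>a\<bar> / sqrt 2)"
    and xm_ode: "\<And>t. (xm has_vector_derivative X_minus a \<epsilon> (xm t)) (at t)"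
    and xm_init: "xm 0 = P_pt a \<epsilon>"
    and xp_ode: "\<And>t. (xp has_vector_derivative X_plus a \<epsilon> (xp t)) (at t)"
    and xp_init: "xp 0 = P_pt a \<epsilon>"
  shows "(\<forall>t. 0 < t \<and> t < t_minus a \<epsilon> \<longrightarrow> (norm (xm t))^2 < 1)
       \<and> (\<forall>t. 0 < t \<and> t < t_plus a \<epsilon> \<longrightarrow> (norm (xp t))^2 > 1)"
proof -
  note bounds = sqrt2_window_imp_power2_bounds[OF heps]
  consider "0 < \<epsilon>" | "\<epsilon> < 0"
    using bounds by fastforce
  then show ?thesis
  proof cases
    case 1
    then show ?thesis
      using X_minus_orbit_inside_unit_ball[OF 1 bounds xm_ode xm_init]
        X_plus_orbit_outside_unit_ball[OF 1 bounds(1) xp_ode xp_init] by blast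
  next
    case 2
    then show ?thesis
      using t_minus_t_plus_nonpos[OF 2 bounds] by auto
  qed
qed

end
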